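(* There is a universal constant $C$ such that for every prime $p$, every positive integer $k$, and every pair of distinct $g_0,g_1\in\mathbb{Z}_p$, there is a $k$-party, one-round, deterministic protocol for the $k$-party Sum-Distinguish problem over $\mathbb{Z}_p$ relative to $g_0,g_1$ with total communication complexity at most $k\log k + C\cdot k$.
   Context: Model: parties $P_1,\dots,P_k$ each hold an input $x_i\in\mathbb{Z}_p$; a coordinator (distinct from the parties) wants to compute $f(x_1,\dots,x_k)$. In a one-round protocol each party sends a single message (a bit string depending only on its own input and, for randomized protocols, shared public randomness) to the coordinator, who then outputs a value depending only on the received messages (and the public randomness); there is no other communication. The total communication complexity is the maximum over inputs of the total number of bits sent by all parties. Sum-Distinguish relative to distinct $g_0,g_1\in\mathbb{Z}_p$: the partial function $f$ with $f=1$ if $\sum_i x_i\equiv g_1 \pmod p$ and $f=0$ if $\sum_i x_i\equiv g_0\pmod p$ (undefined otherwise); the protocol must output the correct value on every input where $f$ is defined. $\log$ is base 2. *)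

theory Defs
  imports Complex_Main "HOL-Computational_Algebra.Primes" "HOL-Library.FuncSet"
begin

definition inputs :: "nat \<Rightarrow> nat \<Rightarrow> (nat \<Rightarrow> nat) set" where
  "inputs k p = PiE {0..<k} (\<lambda>_. {0..<p})"

text \<open>A one-round deterministic protocol: party i sends msg i (x i), a bit string
  depending only on its own input; the coordinator sees the list of messages
  and outputs a bit (True = 1, False = 0).\<close>
definition messages :: "nat \<Rightarrow> (nat \<Rightarrow> nat \<Rightarrow> bool list) \<Rightarrow> (nat \<Rightarrow> nat) \<Rightarrow> bool list list" where
  "messages k msg x = map (\<lambda>i. msg i (x i)) [0..<k]"

definition protocol_output ::
  "nat \<Rightarrow> (nat \<Rightarrow> nat \<Rightarrow> bool list) \<Rightarrow> (bool list list \<Rightarrow> bool) \<Rightarrow> (nat \<Rightarrow> nat) \<Rightarrow> bool" where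
  "protocol_output k msg coord x = coord (messages k msg x)"

definition solves_sum_distinguish ::
  "nat \<Rightarrow> nat \<Rightarrow> nat \<Rightarrow> nat \<Rightarrow> (nat \<Rightarrow> nat \<Rightarrow> bool list) \<Rightarrow> (bool list list \<Rightarrow> bool) \<Rightarrow> bool" where
  "solves_sum_distinguish p k g0 g1 msg coord \<longleftrightarrow>
     (\<forall>x \<in> inputs k p.
        ((\<Sum>i<k. x i) mod p = g1 mod p \<longrightarrow> protocol_output k msg coord x = True) \<and>
        ((\<Sum>i<k. x i) mod p = g0 mod p \<longrightarrow> protocol_output k msg coord x = False))"

definition comm_cost :: "nat \<Rightarrow> nat \<Rightarrow> (nat \<Rightarrow> nat \<Rightarrow> bool list) \<Rightarrow> nat" where
  "comm_cost p k msg = Max ((\<lambda>x. \<Sum>i<k. length (msg i (x i))) ` inputs k p)"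

end

theory Submission
  imports Defs "HOL-Number_Theory.Cong" "HOL-Library.Log_Nat"
begin

text \<open>Multiply every input by a constant \<open>c\<close> with \<open>c (g\<^sub>1 - g\<^sub>0) \<equiv> \<lfloor>p/2\<rfloor>\<close> and let the
  first party also add \<open>-c g\<^sub>0\<close>; the scaled inputs \<open>y\<^sub>i \<in> {0..<p}\<close> then sum to \<open>0\<close> or to
  \<open>\<lfloor>p/2\<rfloor>\<close> modulo \<open>p\<close>. Each party sends \<open>\<lfloor>8k y\<^sub>i / p\<rfloor> < 8k\<close>, which takes
  \<open>\<lceil>log k\<rceil> + 3\<close> bits. The rounding errors add up to less than \<open>k\<close>, so the sum \<open>Q\<close> of the
  messages is within \<open>k\<close> below \<open>8k (\<Sum> y\<^sub>i) / p\<close>, a multiple of \<open>8k\<close> in the first case and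
  that multiple plus a number in \<open>[2k, 4k]\<close> in the second, and \<open>Q mod 8k\<close> separates the
  two cases.\<close>

fun bits_of_nat :: "nat \<Rightarrow> nat \<Rightarrow> bool list" where
  "bits_of_nat 0 n = []"
| "bits_of_nat (Suc L) n = odd n # bits_of_nat L (n div 2)"

fun nat_of_bits :: "bool list \<Rightarrow> nat" where
  "nat_of_bits [] = 0"
| "nat_of_bits (b # bs) = of_bool b + 2 * nat_of_bits bs"

lemma length_bits_of_nat [simp]: "length (bits_of_nat L n) = L"
  by (induction L arbitrary: n) auto

lemma nat_of_bits_of_nat: "nat_of_bits (bits_of_nat L n) = n mod 2 ^ L"
proof (induction L arbitrary: n)
  case (Suc L)
  have "n mod 2 ^ Suc L = n mod 2 + 2 * (n div 2 mod 2 ^ L)"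
    by (simp add: mod_mult2_eq mult.commute)
  then show ?case using Suc by (simp add: odd_iff_mod_2_eq_one)
qed simp

lemma sum_div_bounds:
  fixes n :: "'a \<Rightarrow> nat"
  assumes "finite A" and "p > 0"
  shows "p * (\<Sum>i\<in>A. n i div p) \<le> (\<Sum>i\<in>A. n i)"
    and "A \<noteq> {} \<Longrightarrow> (\<Sum>i\<in>A. n i) < p * ((\<Sum>i\<in>A. n i div p) + card A)"
proof -
  show "p * (\<Sum>i\<in>A. n i div p) \<le> (\<Sum>i\<in>A. n i)"
    by (simp add: sum_distrib_left sum_mono times_div_less_eq_dividend)
  assume "A \<noteq> {}"
  have "n i < p * (n i div p + 1)" for i
    using \<open>p > 0\<close> mult_div_mod_eq[of p "n i"] mod_less_divisor[of p "n i"]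
    unfolding distrib_left by linarith
  then have "(\<Sum>i\<in>A. n i) < (\<Sum>i\<in>A. p * (n i div p + 1))"
    using \<open>finite A\<close> \<open>A \<noteq> {}\<close> by (intro sum_strict_mono) auto
  also have "\<dots> = p * ((\<Sum>i\<in>A. n i div p) + card A)"
    by (simp add: sum_distrib_left sum.distrib algebra_simps)
  finally show "(\<Sum>i\<in>A. n i) < p * ((\<Sum>i\<in>A. n i div p) + card A)" .
qed

definition in_window :: "nat \<Rightarrow> nat \<Rightarrow> bool" where
  "in_window k Q \<longleftrightarrow> Q mod (8 * k) \<in> {1..4 * k}"

lemma below_multiple_not_in_window:
  assumes "Q \<le> t * (8 * k)" and "t * (8 * k) < Q + k"
  shows "\<not> in_window k Q"
proof (cases "Q = t * (8 * k)")
  case False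
  define j where "j = t * (8 * k) - Q"
  have j: "1 \<le> j" "j < k"
    using assms False unfolding j_def by auto
  then have "t \<ge> 1"
    unfolding j_def by (cases t) auto
  then have "Q = (t - 1) * (8 * k) + (8 * k - j)"
    using assms j unfolding j_def by (cases t) (auto simp: algebra_simps)
  moreover have "8 * k - j < 8 * k"
    using j by simp
  ultimately have "Q mod (8 * k) = 8 * k - j"
    by (metis mod_less mod_mult_self3)
  then show ?thesis
    using j unfolding in_window_def by auto
qed (simp add: in_window_def)

lemma above_multiple_in_window:
  assumes "t * (8 * k) + k < Q" and "Q \<le> t * (8 * k) + 4 * k"
  shows "in_window k Q"
proof -
  define R where "R = Q - t * (8 * k)"
  have R: "Q = R + t * (8 * k)" "k < R" "R \<le> 4 * k"
    using assms unfolding R_def by auto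
  then have "Q mod (8 * k) = R"
    by simp
  then show ?thesis
    using R unfolding in_window_def by auto
qed

lemma in_window_rounded_sum:
  fixes p k Q S :: nat
  assumes p: "p \<ge> 2" and lower: "p * Q \<le> S * (8 * k)" and upper: "S * (8 * k) < p * (Q + k)"
  shows "S mod p = 0 \<Longrightarrow> \<not> in_window k Q"
    and "S mod p = p div 2 \<Longrightarrow> in_window k Q"
proof -
  define t where "t = S div p"
  assume "S mod p = 0"
  then have S: "S = p * t"
    using mult_div_mod_eq[of p S] unfolding t_def by simp
  show "\<not> in_window k Q"
  proof (rule below_multiple_not_in_window)
    show "Q \<le> t * (8 * k)"
      using lower p by (simp add: S mult.assoc)
    show "t * (8 * k) < Q + k"
      using upper p by (simp add: S mult.assoc)
  qed
next
  define t h where "t = S div p" and "h = p div 2"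
  assume "S mod p = p div 2"
  then have S: "S = p * t + h"
    unfolding t_def h_def by (metis div_mult_mod_eq mult.commute)
  have h: "2 * h \<le> p" "p \<le> 4 * h"
    using p unfolding h_def by auto
  show "in_window k Q"
  proof (rule above_multiple_in_window)
    have "p * (2 * Q) \<le> 2 * (p * (t * (8 * k))) + (2 * h) * (8 * k)"
      using lower S by (simp add: algebra_simps)
    also have "\<dots> \<le> p * (2 * (t * (8 * k)) + 8 * k)"
      using h by (simp add: algebra_simps)
    finally show "Q \<le> t * (8 * k) + 4 * k"
      using p by simp
    have "p * (4 * (t * (8 * k)) + 8 * k) \<le> 4 * (S * (8 * k))"
      using h S by (simp add: algebra_simps)
    also have "\<dots> < p * (4 * (Q + k))"
      using upper by linarith
    finally have "4 * (t * (8 * k)) + 8 * k < 4 * (Q + k)"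
      by simp
    then show "t * (8 * k) + k < Q"
      by simp
  qed
qed

lemma exists_mod_multiple:
  fixes a b p :: nat
  assumes "coprime a p"
  shows "\<exists>c. (c * a) mod p = b mod p"
proof -
  obtain x where "[a * x = Suc 0] (mod p)"
    using cong_solve_coprime_nat[OF assms] by blast
  then have "[x * b * a = b] (mod p)"
    using cong_scalar_right[of "a * x" "Suc 0" p b] by (simp add: ac_simps)
  then show ?thesis
    unfolding cong_def by blast
qed

lemma coprime_diff_mod_prime:
  fixes p g0 g1 :: nat
  assumes "prime p" and "g0 < p" and "g1 < p" and "g0 \<noteq> g1"
  shows "coprime (g1 + (p - g0)) p"
proof -
  have "\<not> p dvd g1 + (p - g0)"
  proof
    assume "p dvd g1 + (p - g0)"
    then obtain m where m: "g1 + (p - g0) = p * m" ..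
    have "0 < p * m" "p * m < p * 2"
      unfolding m[symmetric] using assms by auto
    then have "m = 1"
      by (simp add: mult_less_cancel1)
    then show False
      using m assms by auto
  qed
  then show ?thesis
    using prime_imp_coprime[OF \<open>prime p\<close>] coprime_commute by blast
qed

definition scaled_input :: "nat \<Rightarrow> nat \<Rightarrow> nat \<Rightarrow> nat \<Rightarrow> nat \<Rightarrow> nat" where
  "scaled_input p c g0 i v = (c * v + (if i = 0 then c * (p - g0) else 0)) mod p"

definition rounded_input :: "nat \<Rightarrow> nat \<Rightarrow> nat \<Rightarrow> nat \<Rightarrow> nat \<Rightarrow> nat \<Rightarrow> nat" where
  "rounded_input p k c g0 i v = scaled_input p c g0 i v * (8 * k) div p"

definition rounding_msg :: "nat \<Rightarrow> nat \<Rightarrow> nat \<Rightarrow> nat \<Rightarrow> nat \<Rightarrow> nat \<Rightarrow> bool list" where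
  "rounding_msg p k c g0 i v = bits_of_nat (ceillog2 k + 3) (rounded_input p k c g0 i v)"

definition window_coord :: "nat \<Rightarrow> bool list list \<Rightarrow> bool" where
  "window_coord k ms = in_window k (sum_list (map nat_of_bits ms))"

lemma rounded_input_less:
  assumes "p > 0" and "k > 0"
  shows "rounded_input p k c g0 i v < 8 * k"
  using assms unfolding rounded_input_def scaled_input_def
  by (simp add: div_less_iff_less_mult)

lemma protocol_output_rounding:
  assumes "p > 0"
  shows "protocol_output k (rounding_msg p k c g0) (window_coord k) x
           = in_window k (\<Sum>i<k. rounded_input p k c g0 i (x i))"
proof -
  have "8 * k \<le> 2 ^ (ceillog2 k + 3)"
    using le_two_power_ceillog2[of k] by (simp add: power_add)
  then have "nat_of_bits (rounding_msg p k c g0 i v) = rounded_input p k c g0 i v"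
    if "k > 0" for i v
    using rounded_input_less[OF assms that, of c g0 i v]
    unfolding rounding_msg_def nat_of_bits_of_nat by simp
  then show ?thesis
    unfolding protocol_output_def window_coord_def messages_def
    by (cases "k = 0") (simp_all add: comp_def sum_list_sum_nth atLeast0LessThan)
qed

lemma sum_scaled_input_mod:
  assumes "k > 0"
  shows "(\<Sum>i<k. scaled_input p c g0 i (x i)) mod p = (c * ((\<Sum>i<k. x i) + (p - g0))) mod p"
proof -
  have "(\<Sum>i<k. scaled_input p c g0 i (x i)) mod p
          = (\<Sum>i<k. c * x i + (if i = 0 then c * (p - g0) else 0)) mod p"
    unfolding scaled_input_def by (simp add: mod_sum_eq)
  also have "(\<Sum>i<k. c * x i + (if i = 0 then c * (p - g0) else 0)) = c * ((\<Sum>i<k. x i) + (p - g0))"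
    using assms by (simp add: sum.distrib sum_distrib_left algebra_simps)
  finally show ?thesis .
qed

lemma rounding_protocol_solves:
  assumes p: "p \<ge> 2" and "k > 0" and "g0 < p"
    and c: "(c * (g1 + (p - g0))) mod p = p div 2"
  shows "solves_sum_distinguish p k g0 g1 (rounding_msg p k c g0) (window_coord k)"
  unfolding solves_sum_distinguish_def
proof (intro ballI conjI impI)
  fix x
  define Q where "Q = (\<Sum>i<k. rounded_input p k c g0 i (x i))"
  define S where "S = (\<Sum>i<k. scaled_input p c g0 i (x i))"
  have out: "protocol_output k (rounding_msg p k c g0) (window_coord k) x = in_window k Q"
    unfolding Q_def using p by (simp add: protocol_output_rounding)
  have lower: "p * Q \<le> S * (8 * k)" and upper: "S * (8 * k) < p * (Q + k)"
    using sum_div_bounds[of "{..<k}" p "\<lambda>i. scaled_input p c g0 i (x i) * (8 * k)"] p \<open>k > 0\<close>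
    unfolding Q_def S_def rounded_input_def by (simp_all add: sum_distrib_right lessThan_empty_iff)
  have S_mod: "S mod p = (c * ((\<Sum>i<k. x i) + (p - g0))) mod p"
    unfolding S_def using \<open>k > 0\<close> by (rule sum_scaled_input_mod)
  show "protocol_output k (rounding_msg p k c g0) (window_coord k) x = True"
    if "(\<Sum>i<k. x i) mod p = g1 mod p"
  proof -
    have "((\<Sum>i<k. x i) + (p - g0)) mod p = (g1 + (p - g0)) mod p"
      using that by (metis mod_add_left_eq)
    then have "S mod p = p div 2"
      using S_mod c by (metis mod_mult_right_eq)
    then show ?thesis
      using in_window_rounded_sum(2)[OF p lower upper] out by simp
  qed
  show "protocol_output k (rounding_msg p k c g0) (window_coord k) x = False"
    if "(\<Sum>i<k. x i) mod p = g0 mod p"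
  proof -
    have "((\<Sum>i<k. x i) + (p - g0)) mod p = ((\<Sum>i<k. x i) mod p + (p - g0)) mod p"
      by (simp add: mod_add_left_eq)
    also have "\<dots> = 0"
      using that \<open>g0 < p\<close> by simp
    finally have "S mod p = 0"
      using S_mod by (metis mod_mult_right_eq mult_0_right mod_0)
    then show ?thesis
      using in_window_rounded_sum(1)[OF p lower upper] out by simp
  qed
qed

lemma comm_cost_rounding_msg:
  assumes "p > 0"
  shows "comm_cost p k (rounding_msg p k c g0) = k * (ceillog2 k + 3)"
proof -
  have "inputs k p \<noteq> {}"
    unfolding inputs_def using assms by (simp add: PiE_eq_empty_iff)
  then have "(\<lambda>x. \<Sum>i<k. length (rounding_msg p k c g0 i (x i))) ` inputs k p = {k * (ceillog2 k + 3)}"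
    unfolding rounding_msg_def by auto
  then show ?thesis
    unfolding comm_cost_def by simp
qed

theorem theorem3p3:
  shows "\<exists>C::real. \<forall>(p::nat) (k::nat) (g0::nat) (g1::nat).
           prime p \<longrightarrow> 0 < k \<longrightarrow> g0 < p \<longrightarrow> g1 < p \<longrightarrow> g0 \<noteq> g1 \<longrightarrow>
           (\<exists>(msg :: nat \<Rightarrow> nat \<Rightarrow> bool list) (coord :: bool list list \<Rightarrow> bool).
              solves_sum_distinguish p k g0 g1 msg coord \<and>
              real (comm_cost p k msg) \<le> real k * log 2 (real k) + C * real k)"
proof (intro exI[of _ 4] allI impI)
  fix p k g0 g1 :: nat
  assume "prime p" "0 < k" "g0 < p" "g1 < p" "g0 \<noteq> g1"
  then have p: "p \<ge> 2"
    by (simp add: prime_ge_2_nat)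
  obtain c where c: "(c * (g1 + (p - g0))) mod p = p div 2"
    using exists_mod_multiple[OF coprime_diff_mod_prime, of p g0 g1 "p div 2"]
      \<open>prime p\<close> \<open>g0 < p\<close> \<open>g1 < p\<close> \<open>g0 \<noteq> g1\<close> p by auto
  have "real (ceillog2 k + 3) \<le> log 2 (real k) + 4"
    using ceillog2_less_log[OF \<open>0 < k\<close>] by simp
  then have "real k * real (ceillog2 k + 3) \<le> real k * (log 2 (real k) + 4)"
    by (rule mult_left_mono) simp
  then have "real (k * (ceillog2 k + 3)) \<le> real k * log 2 (real k) + 4 * real k"
    by (simp add: algebra_simps)
  then show "\<exists>msg coord. solves_sum_distinguish p k g0 g1 msg coord \<and>
               real (comm_cost p k msg) \<le> real k * log 2 (real k) + 4 * real k"
    using rounding_protocol_solves[OF p \<open>0 < k\<close> \<open>g0 < p\<close> c] comm_cost_rounding_msg[of p]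
      p by auto
qed

end
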